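(* Let $f$ be an entire function of finite order and let $n(r)$ denote the number of zeros of $f$ (counted with multiplicity) in the closed disk $\{|z|\le r\}$. Suppose there exist $r_0>0$ and $K>1$ such that $n(2r)\le K\,n(r)$ for all $r\ge r_0$. For $\mu>0$ let $F_\mu$ be the set of all $r\ge r_0$ such that \[ n(t)\le \left(\tfrac{t}{r}\right)^{\mu} n(r)\ \text{ for all } t\ge r \qquad\text{and}\qquad n(t)\ge \left(\tfrac{t}{r}\right)^{\mu} n(r)\ \text{ for all } r_0\le t\le r . \] Then for every $\delta>0$ there exists $\mu>0$ such that $\operatorname{meas}\bigl(F_\mu\cap[R,2R]\bigr)\ge (1-\delta)R$ for all $R\ge 2r_0$.
   Context: $\operatorname{meas}$ denotes one-dimensional Lebesgue measure on $\mathbb R$. *)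

theory Defs
  imports "HOL-Analysis.Analysis"
begin

text \<open>Entire function of finite order: the order
  limsup log log M(r) / log r is finite, i.e. for some rho,
  M(r) = max_{|z| <= r} |f z| <= exp (r^rho) for all sufficiently large r.\<close>
definition finite_order :: "(complex \<Rightarrow> complex) \<Rightarrow> bool" where
  "finite_order f \<longleftrightarrow>
     (\<exists>\<rho>::real. \<forall>\<^sub>F r in at_top. \<forall>z. norm z \<le> r \<longrightarrow> norm (f z) \<le> exp (r powr \<rho>))"

definition zero_mult :: "(complex \<Rightarrow> complex) \<Rightarrow> complex \<Rightarrow> nat" where
  "zero_mult f z = (LEAST k. (deriv ^^ k) f z \<noteq> 0)"

definition zero_count :: "(complex \<Rightarrow> complex) \<Rightarrow> real \<Rightarrow> nat" where
  "zero_count f r = (\<Sum>z\<in>{z. f z = 0 \<and> norm z \<le> r}. zero_mult f z)"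

definition F_set :: "(complex \<Rightarrow> complex) \<Rightarrow> real \<Rightarrow> real \<Rightarrow> real set" where
  "F_set f r\<^sub>0 \<mu> = {r. r \<ge> r\<^sub>0 \<and>
      (\<forall>t\<ge>r. real (zero_count f t) \<le> (t / r) powr \<mu> * real (zero_count f r)) \<and>
      (\<forall>t. r\<^sub>0 \<le> t \<and> t \<le> r \<longrightarrow> real (zero_count f t) \<ge> (t / r) powr \<mu> * real (zero_count f r))}"

end

theory Submission
  imports Defs "HOL-Complex_Analysis.Conformal_Mappings"
begin

(* Only two properties of the zero-counting function n(r) = zero_count f r are used:
   it is nondecreasing (zeros of a nonzero entire function are finite in every disc) and it
   satisfies the doubling bound n(2r) <= K n(r) for r >= r0.

   Fix mu with K^2 <= 2^mu and R >= 2 r0.  For a radius r in [R,2R] the two defining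
   inequalities of F_mu split into a far range (t >= 2r, resp. t <= r/2), which follows from
   iterating the doubling bound, and a near range inside [R/2,4R].  In the near range it suffices
   that the step function g = ln n grows at slope at most nu = mu/(4R) to the right of r on
   [R,4R] and to the left of r on [R/2,2R].  A rising-sun type covering lemma for monotone step
   functions (locale monotone_step_function) shows that such points fill all of an interval
   [a,b] up to measure (g b - g a)/nu; as g increases by at most 2 ln K on both intervals, the
   exceptional set in [R,2R] has measure at most 16 R ln K/mu, which is <= delta R for large
   mu.  Lebesgue measurability of F_mu holds because its closure adds only discontinuity points
   of the monotone function n, a countable set. *)

lemma lmeasurable_subset_interval:
  fixes S :: "real set"
  shows "S \<subseteq> {a..b} \<Longrightarrow> S \<in> sets lebesgue \<Longrightarrow> S \<in> lmeasurable"
  by (rule fmeasurableI2[OF lmeasurable_interval(1)])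

lemma measure_interval_Un:
  fixes S :: "real set"
  assumes S: "S \<in> sets lebesgue" "S \<subseteq> {\<tau><..b}" and c: "x \<le> c" "c \<le> \<tau>"
  shows "{x<..<c} \<union> S \<in> sets lebesgue"
    and "measure lebesgue ({x<..<c} \<union> S) = (c - x) + measure lebesgue S"
proof -
  have "S \<subseteq> {\<tau>..b}" using S(2) by auto
  then have S_fin: "S \<in> lmeasurable" using S(1) by (rule lmeasurable_subset_interval)
  then show "{x<..<c} \<union> S \<in> sets lebesgue"
    using lmeasurable_interval(2)[of x c] by (auto intro: fmeasurableD)
  have "S - {x<..<c} = S" using S(2) c by auto
  then show "measure lebesgue ({x<..<c} \<union> S) = (c - x) + measure lebesgue S"
    using measure_Un2[OF lmeasurable_interval(2)[of x c] S_fin] c by simp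
qed

lemma measure_Int_lower_bound:
  assumes fin: "A \<in> fmeasurable M" "B \<in> fmeasurable M"
    and sub: "S \<in> sets M" "T \<in> sets M" "S \<subseteq> A" "T \<subseteq> B"
    and J: "J \<in> sets M" "J \<subseteq> A" "J \<subseteq> B"
  shows "measure M J - (measure M A - measure M S) - (measure M B - measure M T)
           \<le> measure M (J \<inter> S \<inter> T)"
proof -
  have "J \<subseteq> (J \<inter> S \<inter> T) \<union> ((A - S) \<union> (B - T))" using J by auto
  moreover have "(J \<inter> S \<inter> T) \<union> ((A - S) \<union> (B - T)) \<in> fmeasurable M"
  proof (intro fmeasurable.Un)
    show "J \<inter> S \<inter> T \<in> fmeasurable M"
      by (rule fmeasurableI2[OF fin(1)]) (use sub J in auto)
    show "A - S \<in> fmeasurable M"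
      by (rule fmeasurableI2[OF fin(1)]) (use sub fmeasurableD[OF fin(1)] in auto)
    show "B - T \<in> fmeasurable M"
      by (rule fmeasurableI2[OF fin(2)]) (use sub fmeasurableD[OF fin(2)] in auto)
  qed
  ultimately have "measure M J \<le> measure M ((J \<inter> S \<inter> T) \<union> ((A - S) \<union> (B - T)))"
    by (rule measure_mono_fmeasurable[OF _ J(1)])
  also have "\<dots> \<le> measure M (J \<inter> S \<inter> T) + (measure M (A - S) + measure M (B - T))"
    using fin sub J by (intro order.trans[OF measure_Un_le] add_left_mono measure_Un_le) auto
  also have "measure M (A - S) = measure M A - measure M S"
    using fin(1) sub(1,3) by (intro measure_Diff) (auto simp: fmeasurable_def)
  also have "measure M (B - T) = measure M B - measure M T"
    using fin(2) sub(2,4) by (intro measure_Diff) (auto simp: fmeasurable_def)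
  finally show ?thesis by simp
qed

text \<open>A rising-sun lemma for monotone step functions.\<close>

locale monotone_step_function =
  fixes g :: "real \<Rightarrow> real" and a b \<nu> :: real
  assumes slope_pos: "\<nu> > 0"
    and mono: "\<And>s t. a \<le> s \<Longrightarrow> s \<le> t \<Longrightarrow> t \<le> b \<Longrightarrow> g s \<le> g t"
    and finite_values: "finite (g ` {a..b})"
begin

definition slope_bounded_from :: "real \<Rightarrow> bool" where
  "slope_bounded_from r \<longleftrightarrow> (\<forall>t\<in>{r<..b}. g t - g r \<le> \<nu> * (t - r))"

definition bad_points :: "real \<Rightarrow> real \<Rightarrow> real set" where
  "bad_points x v = {r\<in>{x<..b}. \<exists>t\<in>{r<..b}. g t = v \<and> \<nu> * (t - r) < g t - g r}"

definition level_entry :: "real \<Rightarrow> real \<Rightarrow> real" where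
  "level_entry x v = Inf {s\<in>{x<..b}. g s = v}"

lemma bdd_below_bad_points: "bdd_below (bad_points x v)"
  unfolding bad_points_def by (rule bdd_belowI[of _ x]) auto

lemma level_entry_le: "t \<in> {x<..b} \<Longrightarrow> g t = v \<Longrightarrow> level_entry x v \<le> t"
  unfolding level_entry_def by (rule cInf_lower) (auto intro!: bdd_belowI[of _ x])

lemma above_level_entry:
  assumes "a \<le> x" "t \<in> {x<..b}" "g t = v" "s \<in> {level_entry x v<..b}"
  shows "v \<le> g s"
proof -
  obtain t' where "t' \<in> {x<..b}" "g t' = v" "t' < s"
    using cInf_lessD[of "{s\<in>{x<..b}. g s = v}" s] assms(2-4) unfolding level_entry_def by auto
  then show "v \<le> g s" using mono[of t' s] assms by auto
qed

lemma bad_point_bounds: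
  assumes ax: "a \<le> x" and w: "\<forall>s\<in>{x<..b}. w \<le> g s"
    and r: "r \<in> bad_points x v" and s: "s \<in> {x<..b}" "g s = v"
  shows "r < s" "w < v" "\<nu> * (level_entry x v - r) < v - w"
proof -
  from r obtain t where rx: "r \<in> {x<..b}" and t: "t \<in> {r<..b}" "g t = v" "\<nu> * (t - r) < g t - g r"
    unfolding bad_points_def by auto
  have "0 < \<nu> * (t - r)" using t slope_pos by simp
  then have grv: "g r < v" using t by linarith
  show "r < s"
  proof (rule ccontr)
    assume "\<not> r < s"
    then have "g s \<le> g r" using mono[of s r] s rx ax by auto
    then show False using s grv by auto
  qed
  have wr: "w \<le> g r" using w rx by auto
  then show "w < v" using grv by linarith
  have "level_entry x v \<le> t" using t rx by (intro level_entry_le) auto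
  then have "\<nu> * (level_entry x v - r) \<le> \<nu> * (t - r)" using slope_pos by (intro mult_left_mono) auto
  then show "\<nu> * (level_entry x v - r) < v - w" using t wr by linarith
qed

lemma leftmost_bad_value:
  assumes ax: "a \<le> x" and bad: "\<exists>r\<in>{x<..b}. \<not> slope_bounded_from r"
  obtains v where "bad_points x v \<noteq> {}"
    "\<And>v'. bad_points x v' \<noteq> {} \<Longrightarrow> Inf (bad_points x v) \<le> Inf (bad_points x v')"
proof -
  define V where "V = {v \<in> g ` {a..b}. bad_points x v \<noteq> {}}"
  have V_iff: "v \<in> V \<longleftrightarrow> bad_points x v \<noteq> {}" for v
    using ax unfolding V_def bad_points_def by fastforce
  obtain r t where "r \<in> {x<..b}" "t \<in> {r<..b}" "\<nu> * (t - r) < g t - g r"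
    using bad unfolding slope_bounded_from_def by (auto simp: not_le)
  then have "r \<in> bad_points x (g t)" unfolding bad_points_def by auto
  then have "bad_points x (g t) \<noteq> {}" by auto
  then have "V \<noteq> {}" using V_iff by blast
  moreover have "finite V" using finite_values unfolding V_def by auto
  ultimately obtain v where "v \<in> V" "\<And>v'. v' \<in> V \<Longrightarrow> Inf (bad_points x v) \<le> Inf (bad_points x v')"
    using ex_min_if_finite[of "(\<lambda>v. Inf (bad_points x v)) ` V"] by (auto simp: not_less)
  then show thesis using that V_iff by blast
qed

lemma slope_bounded_before_bad_points:
  assumes "c \<le> b" and c: "\<And>v. bad_points x v \<noteq> {} \<Longrightarrow> c \<le> Inf (bad_points x v)"
    and r: "r \<in> {x<..<c}"
  shows "slope_bounded_from r"
  unfolding slope_bounded_from_def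
proof
  fix t assume t: "t \<in> {r<..b}"
  show "g t - g r \<le> \<nu> * (t - r)"
  proof (rule ccontr)
    assume "\<not> ?thesis"
    then have "r \<in> bad_points x (g t)" using r t assms(1) unfolding bad_points_def by auto
    then have "c \<le> r" using c[of "g t"] cInf_lower[OF _ bdd_below_bad_points] by fastforce
    then show False using r by auto
  qed
qed

lemma sweep_step:
  assumes ax: "a \<le> x" and w: "\<forall>s\<in>{x<..b}. w \<le> g s"
    and bad: "\<exists>r\<in>{x<..b}. \<not> slope_bounded_from r"
  obtains c \<tau> v where "x \<le> c" "c \<le> \<tau>" "\<tau> \<le> b" "\<tau> - (v - w) / \<nu> \<le> c"
    "w < v" "v \<in> g ` {a..b}" "\<forall>s\<in>{\<tau><..b}. v \<le> g s" "v \<le> g b"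
    "\<forall>r\<in>{x<..<c}. slope_bounded_from r"
proof -
  obtain v where v: "bad_points x v \<noteq> {}"
    and v_min: "\<And>v'. bad_points x v' \<noteq> {} \<Longrightarrow> Inf (bad_points x v) \<le> Inf (bad_points x v')"
    using leftmost_bad_value[OF ax bad] by blast
  define c where "c = Inf (bad_points x v)"
  define \<tau> where "\<tau> = level_entry x v"
  obtain r1 where r1: "r1 \<in> bad_points x v" using v by auto
  then obtain t1 where t1: "t1 \<in> {x<..b}" "g t1 = v" "r1 < t1"
    unfolding bad_points_def by auto
  have "x \<le> c" unfolding c_def using r1 by (intro cInf_greatest) (auto simp: bad_points_def)
  moreover have "c \<le> \<tau>"
  proof -
    have "r1 \<le> \<tau>" unfolding \<tau>_def level_entry_def using t1 bad_point_bounds(1)[OF ax w r1]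
      by (intro cInf_greatest) (auto simp: less_imp_le)
    moreover have "c \<le> r1" unfolding c_def using r1 bdd_below_bad_points by (rule cInf_lower)
    ultimately show ?thesis by linarith
  qed
  moreover have "\<tau> \<le> b" using level_entry_le[OF t1(1,2)] t1(1) unfolding \<tau>_def by auto
  moreover have "\<tau> - (v - w) / \<nu> \<le> c"
    unfolding c_def using v
  proof (rule cInf_greatest)
    fix r assume "r \<in> bad_points x v"
    then have "\<nu> * (\<tau> - r) < v - w" using bad_point_bounds(3)[OF ax w _ t1(1,2)] unfolding \<tau>_def by blast
    then show "\<tau> - (v - w) / \<nu> \<le> r" using slope_pos by (simp add: field_simps)
  qed
  moreover have "w < v" using bad_point_bounds(2)[OF ax w r1 t1(1,2)] .
  moreover have "v \<in> g ` {a..b}" using t1 ax by auto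
  moreover have "\<forall>s\<in>{\<tau><..b}. v \<le> g s" using above_level_entry[OF ax t1(1,2)] unfolding \<tau>_def by blast
  moreover have "v \<le> g b" using mono[of t1 b] t1 ax by auto
  moreover have "\<forall>r\<in>{x<..<c}. slope_bounded_from r"
    using slope_bounded_before_bad_points[of c x, OF _ v_min[folded c_def]] \<open>c \<le> \<tau>\<close> \<open>\<tau> \<le> b\<close>
    by auto
  ultimately show thesis by (rule that)
qed

text \<open>The sweep itself, by induction on the number of values of g above the current level w:
  keep the slope-bounded interval (x,c) and restart at tau with the higher level v.\<close>

lemma sweep_from_induct:
  "card {u \<in> g ` {a..b}. w < u} \<le> k \<Longrightarrow> a \<le> x \<Longrightarrow> x \<le> b \<Longrightarrow>
   \<forall>s\<in>{x<..b}. w \<le> g s \<Longrightarrow> w \<le> g b \<Longrightarrow>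
   \<exists>S\<in>sets lebesgue. S \<subseteq> {x<..b} \<and> (\<forall>r\<in>S. slope_bounded_from r)
     \<and> (b - x) - (g b - w) / \<nu> \<le> measure lebesgue S"
proof (induction k arbitrary: x w rule: less_induct)
  case (less k x w)
  show ?case
  proof (cases "\<forall>r\<in>{x<..b}. slope_bounded_from r")
    case True
    have "0 \<le> (g b - w) / \<nu>" using less.prems(5) slope_pos by simp
    moreover have "measure lebesgue {x<..b} = b - x" using less.prems(3) by simp
    ultimately have "(b - x) - (g b - w) / \<nu> \<le> measure lebesgue {x<..b}" by linarith
    moreover have "{x<..b} \<in> sets lebesgue" by simp
    ultimately show ?thesis using True by blast
  next
    case False
    then obtain c \<tau> v where c: "x \<le> c" "c \<le> \<tau>" "\<tau> \<le> b" "\<tau> - (v - w) / \<nu> \<le> c"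
      and v: "w < v" "v \<in> g ` {a..b}" "\<forall>s\<in>{\<tau><..b}. v \<le> g s" "v \<le> g b"
      and good: "\<forall>r\<in>{x<..<c}. slope_bounded_from r"
      using sweep_step[OF less.prems(2,4)] by blast
    have fewer_values: "card {u \<in> g ` {a..b}. v < u} < card {u \<in> g ` {a..b}. w < u}"
      using v(1,2) finite_values by (intro psubset_card_mono) auto
    have "a \<le> \<tau>" using less.prems(2) c(1,2) by linarith
    from less.IH[OF order.strict_trans2[OF fewer_values less.prems(1)] order_refl this c(3) v(3,4)]
    obtain S' where S': "S' \<in> sets lebesgue" "S' \<subseteq> {\<tau><..b}" "\<forall>r\<in>S'. slope_bounded_from r"
      "(b - \<tau>) - (g b - v) / \<nu> \<le> measure lebesgue S'"
      by auto
    note union = measure_interval_Un[OF S'(1,2) c(1,2)]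
    have "(b - x) - (g b - w) / \<nu> = ((b - \<tau>) - (g b - v) / \<nu>) + (\<tau> - (v - w) / \<nu>) - x"
      by (simp add: diff_divide_distrib)
    then have "(b - x) - (g b - w) / \<nu> \<le> measure lebesgue ({x<..<c} \<union> S')"
      using S'(4) c(4) union(2) by linarith
    moreover have "{x<..<c} \<union> S' \<subseteq> {x<..b}" using S'(2) c by auto
    ultimately show ?thesis using union(1) S'(3) good by blast
  qed
qed

lemma sweep:
  assumes "a \<le> b"
  obtains S where "S \<in> sets lebesgue" "S \<subseteq> {a..b}" "\<forall>r\<in>S. slope_bounded_from r"
    "(b - a) - (g b - g a) / \<nu> \<le> measure lebesgue S"
proof -
  have "\<forall>s\<in>{a<..b}. g a \<le> g s" "g a \<le> g b" using mono assms by auto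
  from sweep_from_induct[OF order_refl order_refl assms this]
  obtain S where "S \<in> sets lebesgue" "S \<subseteq> {a<..b}" "\<forall>r\<in>S. slope_bounded_from r"
    "(b - a) - (g b - g a) / \<nu> \<le> measure lebesgue S"
    by auto
  moreover have "{a<..b} \<subseteq> {a..b}" by auto
  ultimately show thesis using that by blast
qed

text \<open>The mirror image: points whose slope bound holds towards the left end a, obtained by
  applying the sweep to the reflected step function x \<mapsto> - g (- x) on [-b,-a].\<close>

lemma sweep_left:
  assumes "a \<le> b"
  obtains S where "S \<in> sets lebesgue" "S \<subseteq> {a..b}" "\<forall>r\<in>S. \<forall>t\<in>{a..<r}. g r - g t \<le> \<nu> * (r - t)"
    "(b - a) - (g b - g a) / \<nu> \<le> measure lebesgue S"
proof -
  define h where "h x = - g (- x)" for x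
  interpret reflected: monotone_step_function h "-b" "-a" \<nu>
  proof
    show "h s \<le> h t" if "-b \<le> s" "s \<le> t" "t \<le> -a" for s t
      using mono[of "-t" "-s"] that unfolding h_def by auto
    have "h ` {-b..-a} \<subseteq> uminus ` g ` {a..b}" unfolding h_def by force
    then show "finite (h ` {-b..-a})" using finite_values by (meson finite_imageI finite_subset)
  qed (rule slope_pos)
  obtain S where S: "S \<in> sets lebesgue" "S \<subseteq> {-b..-a}" "\<forall>r\<in>S. reflected.slope_bounded_from r"
    "(-a - -b) - (h (-a) - h (-b)) / \<nu> \<le> measure lebesgue S"
    using reflected.sweep assms by auto
  have "uminus ` S \<in> sets lebesgue"
    by (rule differentiable_image_in_sets_lebesgue[OF S(1)]) (auto intro!: derivative_intros)
  moreover have "measure lebesgue (uminus ` S) = measure lebesgue S"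
    using measure_lebesgue_affine[of "-1" 0 S] by simp
  moreover have "\<forall>r\<in>uminus ` S. \<forall>t\<in>{a..<r}. g r - g t \<le> \<nu> * (r - t)"
  proof (intro ballI)
    fix r t assume r: "r \<in> uminus ` S" and t: "t \<in> {a..<r}"
    then have "-r \<in> S" "-t \<in> {-r<..-a}" by auto
    then have "h (-t) - h (-r) \<le> \<nu> * (-t - -r)"
      using S(3) unfolding reflected.slope_bounded_from_def by blast
    then show "g r - g t \<le> \<nu> * (r - t)" unfolding h_def by (simp add: algebra_simps)
  qed
  moreover have "uminus ` S \<subseteq> {a..b}" using S(2) by auto
  ultimately show thesis using that S(4) unfolding h_def by auto
qed

end

definition regular_radii :: "(real \<Rightarrow> nat) \<Rightarrow> real \<Rightarrow> real \<Rightarrow> real set" where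
  "regular_radii n r\<^sub>0 \<mu> = {r. r \<ge> r\<^sub>0 \<and>
      (\<forall>t\<ge>r. real (n t) \<le> (t / r) powr \<mu> * real (n r)) \<and>
      (\<forall>t. r\<^sub>0 \<le> t \<and> t \<le> r \<longrightarrow> real (n t) \<ge> (t / r) powr \<mu> * real (n r))}"

lemma nat_eq_if_dist_less_one:
  fixes p q :: nat
  shows "dist (real p) (real q) < 1 \<Longrightarrow> p = q"
  by (cases p q rule: linorder_cases) (auto simp: dist_real_def)

lemma locally_constant_at_continuity:
  fixes n :: "real \<Rightarrow> nat"
  assumes "isCont (\<lambda>t. real (n t)) r"
  shows "\<forall>\<^sub>F s in nhds r. n s = n r"
proof -
  have "\<forall>\<^sub>F s in at r. dist (real (n s)) (real (n r)) < 1"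
    using assms unfolding isCont_def by (rule tendstoD) simp
  then have "\<forall>\<^sub>F s in at r. n s = n r"
    by (rule eventually_mono) (rule nat_eq_if_dist_less_one)
  then show ?thesis by (simp add: eventually_nhds_conv_at)
qed

text \<open>If n is constant near r, then the limit of a sequence of points of F_mu is again in F_mu:
  both defining inequalities pass to the limit for each fixed t \<noteq> r.\<close>

lemma regular_radii_limit:
  assumes X: "X \<longlonglongrightarrow> r" "\<And>k. X k \<in> regular_radii n r\<^sub>0 \<mu>"
    and const: "\<forall>\<^sub>F s in nhds r. n s = n r" and r0: "r\<^sub>0 > 0"
  shows "r \<in> regular_radii n r\<^sub>0 \<mu>"
proof -
  have X_ge: "r\<^sub>0 \<le> X k" for k using X(2) unfolding regular_radii_def by auto
  have r_ge: "r\<^sub>0 \<le> r" using X(1) X_ge by (intro tendsto_lowerbound) auto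
  have same: "\<forall>\<^sub>F k in sequentially. n (X k) = n r"
    using eventually_compose_filterlim[OF const X(1)] .
  have X_upper: "real (n t) \<le> (t / X k) powr \<mu> * real (n (X k))" if "X k \<le> t" for k t
    using X(2)[of k] that unfolding regular_radii_def by auto
  have X_lower: "(t / X k) powr \<mu> * real (n (X k)) \<le> real (n t)" if "r\<^sub>0 \<le> t" "t \<le> X k" for k t
    using X(2)[of k] that unfolding regular_radii_def by auto
  have lim: "(\<lambda>k. (t / X k) powr \<mu> * real (n r)) \<longlonglongrightarrow> (t / r) powr \<mu> * real (n r)" if "t > 0" for t
    using r_ge r0 that by (intro tendsto_intros X(1)) auto
  have upper: "real (n t) \<le> (t / r) powr \<mu> * real (n r)" if "r \<le> t" for t
  proof (cases "t = r")
    case False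
    with that have "\<forall>\<^sub>F k in sequentially. X k < t" using X(1) by (intro order_tendstoD(2)) auto
    with same have "\<forall>\<^sub>F k in sequentially. real (n t) \<le> (t / X k) powr \<mu> * real (n r)"
      by eventually_elim (metis X_upper less_imp_le)
    then show ?thesis using lim[of t] r_ge r0 that by (intro tendsto_lowerbound) auto
  qed (use r_ge r0 in simp)
  have lower: "(t / r) powr \<mu> * real (n r) \<le> real (n t)" if "r\<^sub>0 \<le> t" "t \<le> r" for t
  proof (cases "t = r")
    case False
    with that have "\<forall>\<^sub>F k in sequentially. t < X k" using X(1) by (intro order_tendstoD(1)) auto
    with same have "\<forall>\<^sub>F k in sequentially. (t / X k) powr \<mu> * real (n r) \<le> real (n t)"
      by eventually_elim (metis X_lower less_imp_le that(1))
    then show ?thesis using lim[of t] r0 that by (intro tendsto_upperbound) auto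
  qed (use r_ge r0 in simp)
  show ?thesis unfolding regular_radii_def using r_ge upper lower by auto
qed

text \<open>For monotone n, the closure of F_mu \<inter> [a,b] adds only discontinuity points of n, a
  countable and hence null set; so F_mu \<inter> [a,b] is Lebesgue measurable.\<close>

lemma regular_radii_measurable:
  assumes mono: "mono n" and r0: "r\<^sub>0 > 0"
  shows "regular_radii n r\<^sub>0 \<mu> \<inter> {a..b} \<in> sets lebesgue"
proof -
  define C where "C = regular_radii n r\<^sub>0 \<mu> \<inter> {a..b}"
  define D where "D = {r. \<not> isCont (\<lambda>t. real (n t)) r}"
  have "mono (\<lambda>t. real (n t))" using mono by (simp add: mono_def)
  then have "countable D" unfolding D_def by (rule mono_ctble_discont)
  moreover have "closure C - C \<subseteq> D"
  proof
    fix r assume r: "r \<in> closure C - C"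
    have "r \<in> {a..b}" using r closure_minimal[of C "{a..b}"] unfolding C_def by auto
    show "r \<in> D"
    proof (rule ccontr)
      assume "r \<notin> D"
      then have const: "\<forall>\<^sub>F s in nhds r. n s = n r"
        unfolding D_def by (intro locally_constant_at_continuity) auto
      obtain X where "\<And>k. X k \<in> C" "X \<longlonglongrightarrow> r" using r closure_sequential by blast
      then have "r \<in> regular_radii n r\<^sub>0 \<mu>"
        using regular_radii_limit[OF _ _ const r0] unfolding C_def by auto
      then show False using r \<open>r \<in> {a..b}\<close> unfolding C_def by auto
    qed
  qed
  ultimately have "closure C - C \<in> null_sets lborel"
    by (meson countable_imp_null_set_lborel countable_subset)
  then have "closure C - C \<in> sets lebesgue" by (auto intro: sets_completionI_sets dest: null_setsD2)
  then have "closure C - (closure C - C) \<in> sets lebesgue" by (rule sets.Diff[rotated]) simp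
  moreover have "closure C - (closure C - C) = C" using closure_subset by auto
  ultimately show ?thesis unfolding C_def by simp
qed

text \<open>Since ln(b/a) \<ge> (b - a)/b, a bound mu (b - a)/b on the increment of ln between the
  counts x and y gives the power bound y \<le> (b/a)^mu x.\<close>

lemma growth_from_log_increment:
  fixes a b x y \<mu> :: real
  assumes "0 < a" "a \<le> b" "0 < x" "0 < y" "0 \<le> \<mu>"
    and log_incr: "ln y - ln x \<le> \<mu> * ((b - a) / b)"
  shows "y \<le> (b / a) powr \<mu> * x"
proof -
  have "(b - a) / b \<le> ln (b / a)"
    using ln_diff_le[of a b] assms(1,2) by (simp add: ln_div field_simps)
  then have "ln y \<le> \<mu> * ln (b / a) + ln x"
    using log_incr assms(5) mult_left_mono by fastforce
  also have "\<dots> = ln ((b / a) powr \<mu> * x)"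
    using assms(1-3) by (simp add: ln_mult ln_powr)
  finally show ?thesis using assms(1-4) by simp
qed

lemma powr_ratio_swap:
  fixes r t x y \<mu> :: real
  assumes "0 < r" "0 < t" "y \<le> (r / t) powr \<mu> * x"
  shows "(t / r) powr \<mu> * y \<le> x"
proof -
  have "(t / r) powr \<mu> * y \<le> (t / r) powr \<mu> * ((r / t) powr \<mu> * x)"
    using assms(3) by (intro mult_left_mono) auto
  also have "\<dots> = x"
    using assms(1,2) by (simp add: powr_mult[symmetric] mult.assoc[symmetric])
  finally show ?thesis .
qed

lemma slope_relative:
  fixes \<mu> x y c :: real
  assumes "0 \<le> \<mu>" "0 < y" "x \<le> y" "y \<le> c"
  shows "\<mu> / c * (y - x) \<le> \<mu> * ((y - x) / y)"
proof -
  have "(y - x) / c \<le> (y - x) / y" using assms(2-4) by (intro divide_left_mono) auto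
  then show ?thesis using assms(1) mult_left_mono by fastforce
qed

locale doubling_counting_function =
  fixes n :: "real \<Rightarrow> nat" and r\<^sub>0 K :: real
  assumes mono_count: "mono n"
    and r0_pos: "r\<^sub>0 > 0" and K_gt_1: "K > 1"
    and doubling: "\<And>r. r \<ge> r\<^sub>0 \<Longrightarrow> real (n (2 * r)) \<le> K * real (n r)"
begin

lemma count_mono: "s \<le> t \<Longrightarrow> real (n s) \<le> real (n t)"
  using mono_count by (simp add: mono_def)

lemma iterated_doubling: "r\<^sub>0 \<le> s \<Longrightarrow> real (n (2 ^ k * s)) \<le> K ^ k * real (n s)"
proof (induction k)
  case (Suc k)
  have "r\<^sub>0 \<le> 2 ^ k * s" using Suc.prems r0_pos
    by (smt (verit) mult_le_cancel_right1 one_le_power)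
  then have "real (n (2 ^ Suc k * s)) \<le> K * real (n (2 ^ k * s))"
    using doubling[of "2 ^ k * s"] by (simp add: mult.assoc)
  also have "\<dots> \<le> K * (K ^ k * real (n s))"
    using Suc K_gt_1 by (intro mult_left_mono) auto
  finally show ?case by simp
qed simp

lemma exponent_nonneg:
  assumes "K\<^sup>2 \<le> 2 powr \<mu>"
  shows "0 \<le> \<mu>"
proof (rule ccontr)
  assume "\<not> 0 \<le> \<mu>"
  then have "2 powr \<mu> < 1" by (intro powr_less_one) auto
  moreover have "1 < K\<^sup>2" using K_gt_1 by (simp add: one_less_power)
  ultimately show False using assms by linarith
qed

text \<open>Polynomial growth at distant radii: if 2^k s \<le> t < 2^(k+1) s with k \<ge> 1, then
  n(t) \<le> K^(k+1) n(s) \<le> K^(2k) n(s) \<le> (t/s)^mu n(s).\<close>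

lemma far_growth:
  assumes \<mu>: "K\<^sup>2 \<le> 2 powr \<mu>" and s: "r\<^sub>0 \<le> s" and t: "2 * s \<le> t"
  shows "real (n t) \<le> (t / s) powr \<mu> * real (n s)"
proof -
  have s_pos: "s > 0" using s r0_pos by linarith
  obtain m where "t / s < 2 ^ m" using real_arch_pow[of 2 "t / s"] by auto
  then have "t < 2 ^ m * s" using s_pos by (simp add: field_simps)
  then obtain k where k: "2 ^ k * s \<le> t" "t < 2 ^ Suc k * s"
    using ex_least_nat_less[of "\<lambda>i. t < 2 ^ i * s"] t s_pos by (auto simp: not_less)
  have "1 \<le> k" using k t s_pos by (cases k) auto
  have "real (n t) \<le> real (n (2 ^ Suc k * s))" using k(2) by (intro count_mono) simp
  also have "\<dots> \<le> K ^ Suc k * real (n s)" using iterated_doubling[OF s] .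
  also have "K ^ Suc k \<le> (K\<^sup>2) ^ k"
    unfolding power_mult[symmetric] using K_gt_1 \<open>1 \<le> k\<close> by (intro power_increasing) auto
  also have "(K\<^sup>2) ^ k \<le> (2 powr \<mu>) ^ k"
    using \<mu> by (intro power_mono) auto
  also have "(2 powr \<mu>) ^ k = (2 ^ k) powr \<mu>"
    by (simp add: powr_realpow[symmetric] powr_powr mult.commute)
  also have "(2 ^ k) powr \<mu> \<le> (t / s) powr \<mu>"
  proof (rule powr_mono2)
    show "2 ^ k \<le> t / s" using k(1) s_pos by (simp add: field_simps)
  qed (use exponent_nonneg[OF \<mu>] in simp_all)
  finally show ?thesis by (simp add: mult_right_mono)
qed

lemma count_vanishes:
  assumes "n r\<^sub>0 = 0" "r\<^sub>0 \<le> t"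
  shows "n t = 0"
proof -
  obtain k where "t / r\<^sub>0 < 2 ^ k" using real_arch_pow[of 2 "t / r\<^sub>0"] by auto
  then have "t \<le> 2 ^ k * r\<^sub>0" using r0_pos by (simp add: field_simps)
  then have "real (n t) \<le> K ^ k * real (n r\<^sub>0)"
    using count_mono iterated_doubling[of r\<^sub>0 k] order_trans by blast
  then show ?thesis using assms(1) by simp
qed

lemma count_positive: "0 < n r\<^sub>0 \<Longrightarrow> r\<^sub>0 \<le> t \<Longrightarrow> 0 < n t"
  using count_mono[of r\<^sub>0 t] by linarith

lemma log_count_increment:
  assumes "r\<^sub>0 \<le> s" "0 < n s"
  shows "ln (real (n (4 * s))) - ln (real (n s)) \<le> 2 * ln K"
proof -
  have "real (n (4 * s)) \<le> K\<^sup>2 * real (n s)" using iterated_doubling[OF assms(1), of 2] by simp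
  moreover have "0 < n (4 * s)" using assms count_mono[of s "4 * s"] r0_pos by simp
  ultimately have "ln (real (n (4 * s))) \<le> ln (K\<^sup>2 * real (n s))" by simp
  also have "\<dots> = 2 * ln K + ln (real (n s))" using K_gt_1 assms(2) by (simp add: ln_mult ln_realpow)
  finally show ?thesis by simp
qed

text \<open>When n is positive beyond r0, ln n is a monotone step function on every [a,b] with
  a \<ge> r0: its values are among ln 0, ..., ln (n b).\<close>

lemma log_count_step_function:
  assumes "0 < n r\<^sub>0" "r\<^sub>0 \<le> a" "0 < \<nu>"
  shows "monotone_step_function (\<lambda>t. ln (real (n t))) a b \<nu>"
proof
  show "ln (real (n s)) \<le> ln (real (n t))" if "a \<le> s" "s \<le> t" "t \<le> b" for s t
    using count_positive[OF assms(1), of s] count_mono[of s t] that assms(2) by simp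
  have "(\<lambda>t. ln (real (n t))) ` {a..b} \<subseteq> (\<lambda>k. ln (real k)) ` {..n b}"
    using mono_count by (auto simp: mono_def)
  then show "finite ((\<lambda>t. ln (real (n t))) ` {a..b})" by (rule finite_subset) simp
qed (rule assms(3))

text \<open>Growth between two radii s \<le> t: far apart it comes from the doubling bound, and close
  together it follows from a bound on the increment of ln n.\<close>

lemma growth_between:
  assumes \<mu>: "K\<^sup>2 \<le> 2 powr \<mu>" and nonzero: "0 < n r\<^sub>0" and st: "r\<^sub>0 \<le> s" "s \<le> t"
    and near: "s < t \<Longrightarrow> t < 2 * s \<Longrightarrow> ln (real (n t)) - ln (real (n s)) \<le> \<mu> * ((t - s) / t)"
  shows "real (n t) \<le> (t / s) powr \<mu> * real (n s)"
proof -
  consider "2 * s \<le> t" | "t = s" | "s < t" "t < 2 * s" using st by linarith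
  then show ?thesis
  proof cases
    case 1
    then show ?thesis using far_growth[OF \<mu> st(1)] by simp
  next
    case 2
    then show ?thesis using st r0_pos by simp
  next
    case 3
    have "0 < n s" "0 < n t" using count_positive[OF nonzero] st by auto
    then show ?thesis
      using near[OF 3] st r0_pos exponent_nonneg[OF \<mu>] by (intro growth_from_log_increment) auto
  qed
qed

lemma regular_radius_criterion:
  assumes \<mu>: "K\<^sup>2 \<le> 2 powr \<mu>" and R: "2 * r\<^sub>0 \<le> R" and r: "R \<le> r" "r \<le> 2 * R"
    and nonzero: "0 < n r\<^sub>0"
    and right: "\<forall>t\<in>{r<..4 * R}. ln (real (n t)) - ln (real (n r)) \<le> \<mu> / (4 * R) * (t - r)"
    and left: "\<forall>t\<in>{R / 2..<r}. ln (real (n r)) - ln (real (n t)) \<le> \<mu> / (4 * R) * (r - t)"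
  shows "r \<in> regular_radii n r\<^sub>0 \<mu>"
proof -
  have \<mu>_nonneg: "0 \<le> \<mu>" and r0_r: "r\<^sub>0 \<le> r" and r_pos: "0 < r"
    using exponent_nonneg[OF \<mu>] R r r0_pos by auto
  have upper: "real (n t) \<le> (t / r) powr \<mu> * real (n r)" if "r \<le> t" for t
  proof (rule growth_between[OF \<mu> nonzero r0_r that])
    assume "r < t" "t < 2 * r"
    then have "t \<in> {r<..4 * R}" using r by auto
    moreover have "\<mu> / (4 * R) * (t - r) \<le> \<mu> * ((t - r) / t)"
      using \<open>r < t\<close> \<open>t \<in> {r<..4 * R}\<close> r_pos by (intro slope_relative \<mu>_nonneg) auto
    ultimately show "ln (real (n t)) - ln (real (n r)) \<le> \<mu> * ((t - r) / t)"
      using right by fastforce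
  qed
  have lower: "(t / r) powr \<mu> * real (n r) \<le> real (n t)" if t: "r\<^sub>0 \<le> t" "t \<le> r" for t
  proof (rule powr_ratio_swap)
    show "0 < r" "0 < t" using r_pos t r0_pos by auto
    show "real (n r) \<le> (r / t) powr \<mu> * real (n t)"
    proof (rule growth_between[OF \<mu> nonzero t])
      assume "t < r" "r < 2 * t"
      then have "t \<in> {R / 2..<r}" using r by auto
      moreover have "\<mu> / (4 * R) * (r - t) \<le> \<mu> * ((r - t) / r)"
        using \<open>t < r\<close> r r_pos by (intro slope_relative \<mu>_nonneg) auto
      ultimately show "ln (real (n r)) - ln (real (n t)) \<le> \<mu> * ((r - t) / r)"
        using left by fastforce
    qed
  qed
  show ?thesis unfolding regular_radii_def using r0_r upper lower by auto
qed

text \<open>The rising-sun lemma applied to ln n on [R,4R] (to the right) and on [R/2,2R] (to the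
  left): since ln n increases by at most 2 ln K on each of these intervals, the slope-bounded
  radii miss at most 8 R ln K / mu of either interval.\<close>

lemma slope_bounded_radii:
  assumes \<mu>: "0 < \<mu>" and R: "2 * r\<^sub>0 \<le> R" and nonzero: "0 < n r\<^sub>0"
  obtains S1 S2 where "S1 \<in> sets lebesgue" "S1 \<subseteq> {R..4 * R}"
      "\<forall>r\<in>S1. \<forall>t\<in>{r<..4 * R}. ln (real (n t)) - ln (real (n r)) \<le> \<mu> / (4 * R) * (t - r)"
      "measure lebesgue {R..4 * R} - measure lebesgue S1 \<le> 8 * R * ln K / \<mu>"
    and "S2 \<in> sets lebesgue" "S2 \<subseteq> {R / 2..2 * R}"
      "\<forall>r\<in>S2. \<forall>t\<in>{R / 2..<r}. ln (real (n r)) - ln (real (n t)) \<le> \<mu> / (4 * R) * (r - t)"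
      "measure lebesgue {R / 2..2 * R} - measure lebesgue S2 \<le> 8 * R * ln K / \<mu>"
proof -
  define \<nu> where "\<nu> = \<mu> / (4 * R)"
  define g where "g t = ln (real (n t))" for t
  have R_pos: "0 < R" and \<nu>_pos: "0 < \<nu>" using R r0_pos \<mu> by (auto simp: \<nu>_def)
  have deficit: "(g (4 * s) - g s) / \<nu> \<le> 8 * R * ln K / \<mu>" if "r\<^sub>0 \<le> s" for s
  proof -
    have "g (4 * s) - g s \<le> 2 * ln K"
      unfolding g_def using log_count_increment[OF that count_positive[OF nonzero that]] .
    then have "(g (4 * s) - g s) / \<nu> \<le> (2 * ln K) / \<nu>"
      using \<nu>_pos by (intro divide_right_mono) auto
    also have "(2 * ln K) / \<nu> = 8 * R * ln K / \<mu>"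
      unfolding \<nu>_def using R_pos \<mu> by simp
    finally show ?thesis .
  qed
  interpret right: monotone_step_function g R "4 * R" \<nu>
    unfolding g_def using R r0_pos by (intro log_count_step_function nonzero \<nu>_pos) auto
  interpret left: monotone_step_function g "R / 2" "2 * R" \<nu>
    unfolding g_def using R r0_pos by (intro log_count_step_function nonzero \<nu>_pos) auto
  obtain S1 where S1: "S1 \<in> sets lebesgue" "S1 \<subseteq> {R..4 * R}" "\<forall>r\<in>S1. right.slope_bounded_from r"
    "(4 * R - R) - (g (4 * R) - g R) / \<nu> \<le> measure lebesgue S1"
    using right.sweep R_pos by auto
  obtain S2 where S2: "S2 \<in> sets lebesgue" "S2 \<subseteq> {R / 2..2 * R}"
    "\<forall>r\<in>S2. \<forall>t\<in>{R / 2..<r}. g r - g t \<le> \<nu> * (r - t)"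
    "(2 * R - R / 2) - (g (2 * R) - g (R / 2)) / \<nu> \<le> measure lebesgue S2"
    using left.sweep_left R_pos by auto
  show thesis
  proof (rule that[OF S1(1,2) _ _ S2(1,2)])
    show "\<forall>r\<in>S1. \<forall>t\<in>{r<..4 * R}. ln (real (n t)) - ln (real (n r)) \<le> \<mu> / (4 * R) * (t - r)"
      using S1(3) unfolding right.slope_bounded_from_def by (simp add: \<nu>_def g_def)
    show "\<forall>r\<in>S2. \<forall>t\<in>{R / 2..<r}. ln (real (n r)) - ln (real (n t)) \<le> \<mu> / (4 * R) * (r - t)"
      using S2(3) by (simp add: \<nu>_def g_def)
    show "measure lebesgue {R..4 * R} - measure lebesgue S1 \<le> 8 * R * ln K / \<mu>"
      using S1(4) deficit[of R] R r0_pos R_pos by simp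
    show "measure lebesgue {R / 2..2 * R} - measure lebesgue S2 \<le> 8 * R * ln K / \<mu>"
      using S2(4) deficit[of "R / 2"] R R_pos by simp
  qed
qed

text \<open>Hence F_mu fills [R,2R] up to measure 16 R ln K / mu, unless n vanishes identically on
  [r0,\<infinity>), in which case every radius beyond r0 belongs to F_mu.\<close>

lemma dense_regular_radii:
  assumes \<mu>: "K\<^sup>2 \<le> 2 powr \<mu>" "0 < \<mu>" and R: "2 * r\<^sub>0 \<le> R"
  shows "(1 - 16 * ln K / \<mu>) * R \<le> measure lebesgue (regular_radii n r\<^sub>0 \<mu> \<inter> {R..2 * R})"
proof (cases "n r\<^sub>0 = 0")
  case True
  have "{R..2 * R} \<subseteq> regular_radii n r\<^sub>0 \<mu>"
    using count_vanishes[OF True] R r0_pos unfolding regular_radii_def by auto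
  then have "measure lebesgue (regular_radii n r\<^sub>0 \<mu> \<inter> {R..2 * R}) = R"
    using R r0_pos by (simp add: Int_absorb1)
  moreover have "0 \<le> 16 * ln K / \<mu>" using K_gt_1 \<mu>(2) by simp
  ultimately show ?thesis using R r0_pos by (simp add: mult_le_cancel_right1)
next
  case False
  then have nonzero: "0 < n r\<^sub>0" by simp
  obtain S1 S2 where S1: "S1 \<in> sets lebesgue" "S1 \<subseteq> {R..4 * R}"
      "\<forall>r\<in>S1. \<forall>t\<in>{r<..4 * R}. ln (real (n t)) - ln (real (n r)) \<le> \<mu> / (4 * R) * (t - r)"
      "measure lebesgue {R..4 * R} - measure lebesgue S1 \<le> 8 * R * ln K / \<mu>"
    and S2: "S2 \<in> sets lebesgue" "S2 \<subseteq> {R / 2..2 * R}"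
      "\<forall>r\<in>S2. \<forall>t\<in>{R / 2..<r}. ln (real (n r)) - ln (real (n t)) \<le> \<mu> / (4 * R) * (r - t)"
      "measure lebesgue {R / 2..2 * R} - measure lebesgue S2 \<le> 8 * R * ln K / \<mu>"
    using slope_bounded_radii[OF \<mu>(2) R nonzero] by blast
  have R_pos: "0 < R" using R r0_pos by linarith
  have J: "{R..2 * R} \<in> sets lebesgue" by simp
  have "measure lebesgue {R..2 * R} - (measure lebesgue {R..4 * R} - measure lebesgue S1)
          - (measure lebesgue {R / 2..2 * R} - measure lebesgue S2)
        \<le> measure lebesgue ({R..2 * R} \<inter> S1 \<inter> S2)"
    by (rule measure_Int_lower_bound[OF lmeasurable_interval(1) lmeasurable_interval(1) S1(1) S2(1)
          S1(2) S2(2) J]) (use R_pos in auto)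
  then have "(1 - 16 * ln K / \<mu>) * R \<le> measure lebesgue ({R..2 * R} \<inter> S1 \<inter> S2)"
    using S1(4) S2(4) R_pos by (simp add: algebra_simps)
  also have "\<dots> \<le> measure lebesgue (regular_radii n r\<^sub>0 \<mu> \<inter> {R..2 * R})"
  proof (rule measure_mono_fmeasurable)
    show "{R..2 * R} \<inter> S1 \<inter> S2 \<subseteq> regular_radii n r\<^sub>0 \<mu> \<inter> {R..2 * R}"
      using S1(3) S2(3) by (auto intro!: regular_radius_criterion[OF \<mu>(1) R _ _ nonzero])
    show "{R..2 * R} \<inter> S1 \<inter> S2 \<in> sets lebesgue" by (intro sets.Int J S1(1) S2(1))
    show "regular_radii n r\<^sub>0 \<mu> \<inter> {R..2 * R} \<in> lmeasurable"
      using regular_radii_measurable[OF mono_count r0_pos]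
      by (rule lmeasurable_subset_interval[rotated]) auto
  qed
  finally show ?thesis .
qed

text \<open>Choice of the exponent: mu must dominate the doubling constant (K^2 \<le> 2^mu) and make the
  exceptional proportion 16 ln K / mu smaller than delta.\<close>

lemma exponent_choice:
  assumes "0 < \<delta>"
  obtains \<mu> where "0 < \<mu>" "K\<^sup>2 \<le> 2 powr \<mu>" "16 * ln K / \<mu> \<le> \<delta>"
proof
  define \<mu> where "\<mu> = max (2 * log 2 K) (16 * ln K / \<delta>)"
  have "0 < log 2 K" using K_gt_1 by simp
  then show \<mu>_pos: "0 < \<mu>" by (simp add: \<mu>_def less_max_iff_disj)
  have "2 powr (2 * log 2 K) = 2 powr (log 2 K) * 2 powr (log 2 K)"
    by (simp add: powr_add[symmetric])
  also have "2 powr (log 2 K) = K" using K_gt_1 by simp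
  finally have "K\<^sup>2 = 2 powr (2 * log 2 K)" by (simp add: power2_eq_square)
  also have "\<dots> \<le> 2 powr \<mu>" unfolding \<mu>_def by simp
  finally show "K\<^sup>2 \<le> 2 powr \<mu>" .
  have "16 * ln K / \<delta> \<le> \<mu>" unfolding \<mu>_def by simp
  then show "16 * ln K / \<mu> \<le> \<delta>" using assms \<mu>_pos by (simp add: field_simps)
qed

theorem regular_radii_density:
  "\<forall>\<delta>>0. \<exists>\<mu>>0. \<forall>R\<ge>2 * r\<^sub>0. measure lebesgue (regular_radii n r\<^sub>0 \<mu> \<inter> {R..2 * R}) \<ge> (1 - \<delta>) * R"
proof (intro allI impI)
  fix \<delta> :: real assume "\<delta> > 0"
  then obtain \<mu> where \<mu>: "0 < \<mu>" "K\<^sup>2 \<le> 2 powr \<mu>" "16 * ln K / \<mu> \<le> \<delta>"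
    by (rule exponent_choice)
  have "(1 - \<delta>) * R \<le> measure lebesgue (regular_radii n r\<^sub>0 \<mu> \<inter> {R..2 * R})" if "2 * r\<^sub>0 \<le> R" for R
  proof -
    have "(1 - \<delta>) * R \<le> (1 - 16 * ln K / \<mu>) * R" using \<mu>(3) that r0_pos by (intro mult_right_mono) auto
    also have "\<dots> \<le> measure lebesgue (regular_radii n r\<^sub>0 \<mu> \<inter> {R..2 * R})"
      using dense_regular_radii[OF \<mu>(2,1) that] .
    finally show ?thesis .
  qed
  then show "\<exists>\<mu>>0. \<forall>R\<ge>2 * r\<^sub>0. measure lebesgue (regular_radii n r\<^sub>0 \<mu> \<inter> {R..2 * R}) \<ge> (1 - \<delta>) * R"
    using \<mu>(1) by auto
qed

end

text \<open>The zeros of an entire function that is not identically zero are finite in every closed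
  disc: a nonzero constant has no zeros, and otherwise zeros cannot accumulate.\<close>

lemma zeros_in_disc_finite:
  fixes f :: "complex \<Rightarrow> complex"
  assumes holo: "f holomorphic_on UNIV" and nonzero: "\<exists>z. f z \<noteq> 0"
  shows "finite {z. f z = 0 \<and> norm z \<le> r}"
proof (cases "f constant_on UNIV")
  case True
  then have "{z. f z = 0 \<and> norm z \<le> r} = {}"
    using nonzero unfolding constant_on_def by auto
  then show ?thesis by (metis finite.emptyI)
next
  case False
  have "finite {z \<in> cball 0 r. f z = 0}"
    using False by (intro holomorphic_compact_finite_zeros[OF holo]) auto
  then show ?thesis by (rule finite_subset[rotated]) auto
qed

lemma zero_count_mono:
  assumes "f holomorphic_on UNIV" "\<exists>z. f z \<noteq> 0"
  shows "mono (zero_count f)"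
proof
  fix s t :: real assume "s \<le> t"
  then show "zero_count f s \<le> zero_count f t"
    unfolding zero_count_def using zeros_in_disc_finite[OF assms] by (intro sum_mono2) auto
qed

lemma F_set_eq_regular_radii: "F_set f r\<^sub>0 \<mu> = regular_radii (zero_count f) r\<^sub>0 \<mu>"
  unfolding F_set_def regular_radii_def ..

theorem lemma4:
  fixes f :: "complex \<Rightarrow> complex" and r\<^sub>0 K :: real
  assumes "f holomorphic_on UNIV"
    and "finite_order f"
    and "\<exists>z. f z \<noteq> 0"
    and "r\<^sub>0 > 0" and "K > 1"
    and "\<And>r. r \<ge> r\<^sub>0 \<Longrightarrow> real (zero_count f (2 * r)) \<le> K * real (zero_count f r)"
  shows "\<forall>\<delta>>0. \<exists>\<mu>>0. \<forall>R\<ge>2 * r\<^sub>0.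
           measure lebesgue (F_set f r\<^sub>0 \<mu> \<inter> {R..2 * R}) \<ge> (1 - \<delta>) * R"
proof -
  interpret doubling_counting_function "zero_count f" r\<^sub>0 K
    using zero_count_mono[OF assms(1,3)] assms(4-6) by unfold_locales auto
  show ?thesis unfolding F_set_eq_regular_radii by (rule regular_radii_density)
qed

end
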